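(* Assume $\|X\|/p\le\lambda\le4\|X\|\sqrt{\log p}$. For $p$ sufficiently large and any $\beta^*\in\mathbb R^p$ with support $S_*$ and $s_*=|S_*|$, almost surely \[ \int\Lambda_{n,\beta,\beta^*}(Y)\,d\Pi(\beta)\ge\frac{\pi_p(s_* )}{p^{2s_*}}e^{-\lambda\|\beta^*\|_1}e^{-1}. \]
   Context: $X$ is a deterministic real $n\times p$ matrix, $\|X\|=\max_i\|X_{\cdot,i}\|_2$ (max column norm), $Y\in\mathbb R^n$ the observation. $\Lambda_{n,\beta,\beta^*}(Y)=\exp\big(-\frac12\|X(\beta-\beta^* )\|_2^2+(Y-X\beta^* )^tX(\beta-\beta^* )\big)$. The prior $\Pi$ on $\mathbb R^p$: draw $s$ from a probability $\pi_p$ on $\{0,\dots,p\}$, then $S$ uniformly among subsets of size $s$, then $\beta_i$, $i\in S$, i.i.d. with Laplace density $x\mapsto\frac\lambda2e^{-\lambda|x|}$, and $\beta_i=0$ for $i\notin S$. *)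

theory Defs
  imports "HOL-Analysis.Analysis" "HOL-Probability.Probability"
begin

text \<open>Vectors in R^p are functions nat => real (only indices i < p matter);
  the n x p design matrix X is a function nat => nat => real, X k i for k < n, i < p.\<close>

definition col_norm_max :: "nat \<Rightarrow> nat \<Rightarrow> (nat \<Rightarrow> nat \<Rightarrow> real) \<Rightarrow> real" where
  "col_norm_max n p X = Max ((\<lambda>i. sqrt (\<Sum>k<n. (X k i)\<^sup>2)) ` {..<p})"

definition matvec :: "nat \<Rightarrow> (nat \<Rightarrow> nat \<Rightarrow> real) \<Rightarrow> (nat \<Rightarrow> real) \<Rightarrow> nat \<Rightarrow> real" where
  "matvec p X b k = (\<Sum>i<p. X k i * b i)"

definition Lambda :: "nat \<Rightarrow> nat \<Rightarrow> (nat \<Rightarrow> nat \<Rightarrow> real) \<Rightarrow> (nat \<Rightarrow> real) \<Rightarrow> (nat \<Rightarrow> real)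
    \<Rightarrow> (nat \<Rightarrow> real) \<Rightarrow> real" where
  "Lambda n p X beta betas Y =
     exp (- (1/2) * (\<Sum>k<n. (matvec p X (\<lambda>i. beta i - betas i) k)\<^sup>2)
          + (\<Sum>k<n. (Y k - matvec p X betas k) * matvec p X (\<lambda>i. beta i - betas i) k))"

definition laplace_density :: "real \<Rightarrow> real \<Rightarrow> real" where
  "laplace_density lam x = lam / 2 * exp (- lam * \<bar>x\<bar>)"

definition slab :: "nat set \<Rightarrow> real \<Rightarrow> (nat \<Rightarrow> real) measure" where
  "slab S lam = PiM S (\<lambda>_. density lborel (\<lambda>x. ennreal (laplace_density lam x)))"

definition extend_zero :: "nat set \<Rightarrow> (nat \<Rightarrow> real) \<Rightarrow> nat \<Rightarrow> real" where
  "extend_zero S b = (\<lambda>i. if i \<in> S then b i else 0)"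

text \<open>Integral of a nonnegative function f against the hierarchical prior Pi:
  s ~ pi_p on {0..p}, S uniform among subsets of {0..<p} of size s,
  beta_i (i in S) i.i.d. Laplace, beta_i = 0 otherwise.\<close>
definition prior_nn_integral :: "nat \<Rightarrow> (nat \<Rightarrow> real) \<Rightarrow> real \<Rightarrow> ((nat \<Rightarrow> real) \<Rightarrow> real) \<Rightarrow> ennreal" where
  "prior_nn_integral p pip lam f =
     (\<Sum>s\<le>p. ennreal (pip s / real (p choose s)) *
        (\<Sum>S\<in>{S. S \<subseteq> {..<p} \<and> card S = s}.
            \<integral>\<^sup>+ b. ennreal (f (extend_zero S b)) \<partial>(slab S lam)))"

end

theory Submission
  imports Defs
begin

text \<open>Keep only the prior term with \<open>s = s\<^sub>*\<close> and \<open>S = S\<^sub>*\<close>: it is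
  \<open>\<pi>\<^sub>p(s\<^sub>*) / C(p, s\<^sub>*)\<close> times the integral of \<open>\<Lambda>\<close> against i.i.d. Laplace coordinates on \<open>S\<^sub>*\<close>.
  Substituting \<open>\<beta> = \<beta>\<^sup>* + u\<close> costs at most the factor \<open>exp (- \<lambda> \<parallel>\<beta>\<^sup>*\<parallel>\<^sub>1)\<close>, since the Laplace
  density \<open>\<phi>\<close> satisfies \<open>exp (- \<lambda> \<bar>a\<bar>) \<phi> x \<le> \<phi> (a + x)\<close>. The centred likelihood is
  \<open>exp (- \<parallel>X u\<parallel>\<^sup>2 / 2 + \<epsilon> \<cdot> X u)\<close>, and as the Laplace law is symmetric we may average it over
  \<open>u\<close> and \<open>-u\<close>, which kills the linear term: the average is at least \<open>exp (- 1 / 2)\<close> as soon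
  as \<open>\<parallel>X u\<parallel> \<le> 1\<close>. This holds on the \<open>\<ell>\<^sub>1\<close>-ball of radius \<open>r = 1 / (\<lambda> p)\<close>, because
  \<open>\<parallel>X u\<parallel> \<le> \<parallel>X\<parallel> \<parallel>u\<parallel>\<^sub>1\<close> and \<open>\<parallel>X\<parallel> / p \<le> \<lambda>\<close>. Finally \<open>\<parallel>u\<parallel>\<^sub>1\<close> is Gamma distributed, so the ball
  has mass at least \<open>exp (- \<lambda> r) (\<lambda> r)\<^sup>s / s!\<close>, and \<open>s! C(p, s) \<le> p\<^sup>s\<close>.\<close>

abbreviation laplace :: "real \<Rightarrow> real measure" where
  "laplace lam \<equiv> density lborel (\<lambda>x. ennreal (laplace_density lam x))"

lemma borel_measurable_laplace_density [measurable]: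
  "laplace_density lam \<in> borel_measurable borel"
  unfolding laplace_density_def by measurable

lemma product_sigma_finite_laplace: "product_sigma_finite (\<lambda>_. laplace lam)"
  unfolding product_sigma_finite_def
  by (auto simp: sigma_finite_measure.sigma_finite_iff_density_finite[OF sigma_finite_lborel])

lemma laplace_density_nonneg: "0 < lam \<Longrightarrow> 0 \<le> laplace_density lam x"
  unfolding laplace_density_def by simp

lemma laplace_density_translate_ge:
  assumes "0 < lam" "\<bar>\<sigma>\<bar> = 1"
  shows "exp (- lam * \<bar>a\<bar>) * laplace_density lam x \<le> laplace_density lam (a + \<sigma> * x)"
proof -
  have "\<bar>a + \<sigma> * x\<bar> \<le> \<bar>a\<bar> + \<bar>x\<bar>"
    using abs_triangle_ineq[of a "\<sigma> * x"] assms(2) by (simp add: abs_mult)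
  then have "lam * \<bar>a + \<sigma> * x\<bar> \<le> lam * (\<bar>a\<bar> + \<bar>x\<bar>)"
    using assms(1) by (simp add: mult_left_mono)
  then have "exp (- lam * \<bar>a\<bar>) * exp (- lam * \<bar>x\<bar>) \<le> exp (- lam * \<bar>a + \<sigma> * x\<bar>)"
    by (simp add: exp_add[symmetric] algebra_simps)
  then have "lam / 2 * (exp (- lam * \<bar>a\<bar>) * exp (- lam * \<bar>x\<bar>)) \<le> lam / 2 * exp (- lam * \<bar>a + \<sigma> * x\<bar>)"
    using assms(1) by (intro mult_left_mono) auto
  then show ?thesis
    unfolding laplace_density_def by (simp add: mult_ac)
qed

lemma nn_integral_laplace_translate_ge:
  assumes lam: "0 < lam" and \<sigma>: "\<bar>\<sigma>\<bar> = 1" and [measurable]: "H \<in> borel_measurable borel"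
  shows "ennreal (exp (- lam * \<bar>a\<bar>)) * (\<integral>\<^sup>+x. H (a + \<sigma> * x) \<partial>laplace lam)
    \<le> (\<integral>\<^sup>+x. H x \<partial>laplace lam)"
proof -
  have \<sigma>0: "\<sigma> \<noteq> 0" using \<sigma> by auto
  have "ennreal (exp (- lam * \<bar>a\<bar>)) * (\<integral>\<^sup>+x. H (a + \<sigma> * x) \<partial>laplace lam)
      = (\<integral>\<^sup>+x. ennreal (exp (- lam * \<bar>a\<bar>)) * (ennreal (laplace_density lam x) * H (a + \<sigma> * x)) \<partial>lborel)"
    by (simp add: nn_integral_density nn_integral_cmult)
  also have "\<dots> = (\<integral>\<^sup>+x. ennreal (exp (- lam * \<bar>a\<bar>) * laplace_density lam x) * H (a + \<sigma> * x) \<partial>lborel)"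
    by (simp add: ennreal_mult laplace_density_nonneg[OF lam] mult.assoc)
  also have "\<dots> \<le> (\<integral>\<^sup>+x. ennreal (laplace_density lam (a + \<sigma> * x)) * H (a + \<sigma> * x) \<partial>lborel)"
    using laplace_density_translate_ge[OF lam \<sigma>]
    by (intro nn_integral_mono mult_right_mono ennreal_leI) auto
  also have "\<dots> = (\<integral>\<^sup>+x. ennreal (laplace_density lam x) * H x \<partial>lborel)"
    using \<sigma> by (subst nn_integral_real_affine[OF _ \<sigma>0, where t=a]) auto
  also have "\<dots> = (\<integral>\<^sup>+x. H x \<partial>laplace lam)"
    by (simp add: nn_integral_density)
  finally show ?thesis .
qed

definition affine_on :: "nat set \<Rightarrow> real \<Rightarrow> (nat \<Rightarrow> real) \<Rightarrow> (nat \<Rightarrow> real) \<Rightarrow> nat \<Rightarrow> real" where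
  "affine_on S \<sigma> c u = restrict (\<lambda>i. c i + \<sigma> * u i) S"

lemma affine_on_measurable [measurable]:
  "affine_on S \<sigma> c \<in> measurable (PiM S (\<lambda>_. laplace lam)) (PiM S (\<lambda>_. laplace lam))"
  unfolding affine_on_def by measurable

lemma affine_on_insert:
  "i \<notin> S \<Longrightarrow> affine_on (insert i S) \<sigma> c (u(i := x)) = (affine_on S \<sigma> c u)(i := c i + \<sigma> * x)"
  unfolding affine_on_def by (auto simp: fun_eq_iff)

lemma nn_integral_laplace_PiM_translate_ge:
  assumes lam: "0 < lam" and \<sigma>: "\<bar>\<sigma>\<bar> = 1" and "finite S"
    and "f \<in> borel_measurable (PiM S (\<lambda>_. laplace lam))"
  shows "ennreal (exp (- lam * (\<Sum>i\<in>S. \<bar>c i\<bar>)))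
      * (\<integral>\<^sup>+u. f (affine_on S \<sigma> c u) \<partial>PiM S (\<lambda>_. laplace lam))
    \<le> (\<integral>\<^sup>+u. f u \<partial>PiM S (\<lambda>_. laplace lam))"
  using assms(3,4)
proof (induction S arbitrary: f rule: finite_induct)
  case empty
  then show ?case by (simp add: PiM_empty affine_on_def nn_integral_count_space_finite)
next
  case (insert i S f)
  interpret product_sigma_finite "\<lambda>_. laplace lam" by (rule product_sigma_finite_laplace)
  let ?P = "\<lambda>S. PiM S (\<lambda>_. laplace lam)"
  have [measurable]: "f \<in> borel_measurable (?P (insert i S))" by fact
  define eS where "eS = ennreal (exp (- lam * (\<Sum>i\<in>S. \<bar>c i\<bar>)))"
  define ei where "ei = ennreal (exp (- lam * \<bar>c i\<bar>))"
  define H where "H x = (\<integral>\<^sup>+u. f ((affine_on S \<sigma> c u)(i := x)) \<partial>?P S)" for x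
  interpret S: sigma_finite_measure "?P S" using sigma_finite[OF insert(1)] .
  have [measurable]: "H \<in> borel_measurable borel"
    unfolding H_def by (rule S.borel_measurable_nn_integral) measurable
  have exp_insert: "ennreal (exp (- lam * (\<Sum>i\<in>insert i S. \<bar>c i\<bar>))) = eS * ei"
    using insert(1,2) by (simp add: eS_def ei_def exp_add[symmetric] algebra_simps flip: ennreal_mult)
  have integral_insert: "(\<integral>\<^sup>+u. f (affine_on (insert i S) \<sigma> c u) \<partial>?P (insert i S))
      = (\<integral>\<^sup>+x. H (c i + \<sigma> * x) \<partial>laplace lam)"
    using insert(1,2) by (subst product_nn_integral_insert_rev) (auto simp: H_def affine_on_insert)
  have "ennreal (exp (- lam * (\<Sum>i\<in>insert i S. \<bar>c i\<bar>)))
        * (\<integral>\<^sup>+u. f (affine_on (insert i S) \<sigma> c u) \<partial>?P (insert i S))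
      = eS * (ei * (\<integral>\<^sup>+x. H (c i + \<sigma> * x) \<partial>laplace lam))"
    unfolding exp_insert integral_insert by (simp add: mult.assoc)
  also have "\<dots> \<le> eS * (\<integral>\<^sup>+x. H x \<partial>laplace lam)"
    unfolding ei_def by (intro mult_left_mono nn_integral_laplace_translate_ge[OF lam \<sigma>]) auto
  also have "\<dots> = (\<integral>\<^sup>+x. eS * H x \<partial>laplace lam)"
    by (simp add: nn_integral_cmult)
  also have "\<dots> \<le> (\<integral>\<^sup>+x. (\<integral>\<^sup>+u. f (u(i := x)) \<partial>?P S) \<partial>laplace lam)"
  proof (rule nn_integral_mono)
    fix x
    show "eS * H x \<le> (\<integral>\<^sup>+u. f (u(i := x)) \<partial>?P S)"
      unfolding eS_def H_def by (rule insert.IH[of "\<lambda>u. f (u(i := x))"]) measurable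
  qed
  also have "\<dots> = (\<integral>\<^sup>+u. f u \<partial>?P (insert i S))"
    using insert(1,2) by (subst product_nn_integral_insert_rev) auto
  finally show ?case .
qed

lemma nn_integral_tent_power_ge:
  fixes t :: real
  assumes t: "0 \<le> t"
  shows "ennreal (2 * (t ^ Suc k / Suc k))
    \<le> (\<integral>\<^sup>+x. ennreal (indicator {-t..t} x * (t - \<bar>x\<bar>) ^ k) \<partial>lborel)"
proof -
  let ?f = "\<lambda>x. ennreal ((t - \<bar>x\<bar>) ^ k) * indicator {0..t} x"
  have "((\<lambda>x. - ((t - x) ^ Suc k / Suc k)) has_real_derivative (t - x) ^ k) (at x)" for x
    by (rule derivative_eq_intros refl | simp)+
  then have "(\<integral>\<^sup>+x. ennreal ((t - x) ^ k) * indicator {0..t} x \<partial>lborel) = ennreal (t ^ Suc k / Suc k)"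
    using t by (subst nn_integral_FTC_Icc) (auto simp: zero_power)
  moreover have "?f x = ennreal ((t - x) ^ k) * indicator {0..t} x" for x
    by (simp split: split_indicator)
  ultimately have half: "(\<integral>\<^sup>+x. ?f x \<partial>lborel) = ennreal (t ^ Suc k / Suc k)"
    by simp
  have "ennreal (2 * (t ^ Suc k / Suc k)) = (\<integral>\<^sup>+x. ?f x \<partial>lborel) + (\<integral>\<^sup>+x. ?f (- x) \<partial>lborel)"
  proof -
    have "(\<integral>\<^sup>+x. ?f (- x) \<partial>lborel) = (\<integral>\<^sup>+x. ?f x \<partial>lborel)"
      by (subst nn_integral_real_affine[where c="-1" and t=0, of ?f]) auto
    then show ?thesis
      using t half by (simp flip: ennreal_plus)
  qed
  also have "\<dots> = (\<integral>\<^sup>+x. ?f x + ?f (- x) \<partial>lborel)"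
    by (rule nn_integral_add[symmetric]) auto
  also have "\<dots> \<le> (\<integral>\<^sup>+x. ennreal (indicator {-t..t} x * (t - \<bar>x\<bar>) ^ k) \<partial>lborel)"
    using AE_lborel_singleton[of 0]
    by (intro nn_integral_mono_AE) (auto elim!: eventually_mono split: split_indicator)
  finally show ?thesis .
qed

lemma nn_integral_laplace_poisson_step:
  assumes lam: "0 < lam" and t: "0 \<le> t"
  shows "ennreal (exp (- lam * t) * (lam * t) ^ Suc k / fact (Suc k))
    \<le> (\<integral>\<^sup>+x. ennreal (indicator {-t..t} x * (exp (- lam * (t - \<bar>x\<bar>)) * (lam * (t - \<bar>x\<bar>)) ^ k / fact k))
          \<partial>laplace lam)"
    (is "_ \<le> (\<integral>\<^sup>+x. ennreal (?g x) \<partial>_)")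
proof -
  define C where "C = lam ^ Suc k * exp (- lam * t) / (2 * fact k)"
  have C: "0 \<le> C" using lam by (simp add: C_def)
  have "C * (2 * (t ^ Suc k / Suc k)) = exp (- lam * t) * (lam * t) ^ Suc k / fact (Suc k)"
    unfolding C_def fact_Suc power_mult_distrib by (simp add: field_simps del: of_nat_Suc)
  then have "ennreal (exp (- lam * t) * (lam * t) ^ Suc k / fact (Suc k))
      = ennreal C * ennreal (2 * (t ^ Suc k / Suc k))"
    using C t by (subst ennreal_mult[symmetric]) auto
  also have "\<dots> \<le> ennreal C * (\<integral>\<^sup>+x. ennreal (indicator {-t..t} x * (t - \<bar>x\<bar>) ^ k) \<partial>lborel)"
    using nn_integral_tent_power_ge[OF t] by (rule mult_left_mono) simp
  also have "\<dots> = (\<integral>\<^sup>+x. ennreal (C * (indicator {-t..t} x * (t - \<bar>x\<bar>) ^ k)) \<partial>lborel)"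
    using C by (subst nn_integral_cmult[symmetric])
      (auto intro!: nn_integral_cong simp: ennreal_mult split: split_indicator)
  also have "\<dots> = (\<integral>\<^sup>+x. ennreal (laplace_density lam x) * ennreal (?g x) \<partial>lborel)"
  proof (rule nn_integral_cong)
    fix x :: real
    have "exp (- lam * \<bar>x\<bar>) * exp (- lam * (t - \<bar>x\<bar>)) = exp (- lam * t)"
      by (simp add: exp_add[symmetric] algebra_simps)
    then have "C * (indicator {-t..t} x * (t - \<bar>x\<bar>) ^ k) = laplace_density lam x * ?g x"
      unfolding C_def laplace_density_def power_mult_distrib
      by (simp add: indicator_def field_simps)
    moreover have "0 \<le> ?g x"
      using lam by (auto split: split_indicator)
    ultimately show "ennreal (C * (indicator {-t..t} x * (t - \<bar>x\<bar>) ^ k))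
        = ennreal (laplace_density lam x) * ennreal (?g x)"
      by (metis ennreal_mult laplace_density_nonneg[OF lam])
  qed
  also have "\<dots> = (\<integral>\<^sup>+x. ennreal (?g x) \<partial>laplace lam)"
    by (simp add: nn_integral_density)
  finally show ?thesis .
qed

lemma nn_integral_laplace_PiM_l1_ball_ge:
  assumes lam: "0 < lam" and "finite S" and "0 \<le> t"
  shows "ennreal (exp (- lam * t) * (lam * t) ^ card S / fact (card S))
    \<le> (\<integral>\<^sup>+u. indicator {u. (\<Sum>j\<in>S. \<bar>u j\<bar>) \<le> t} u \<partial>PiM S (\<lambda>_. laplace lam))"
  using assms(2,3)
proof (induction S arbitrary: t rule: finite_induct)
  case (empty t)
  then show ?case using lam by (simp add: PiM_empty nn_integral_count_space_finite)
next
  case (insert i S t)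
  interpret product_sigma_finite "\<lambda>_. laplace lam" by (rule product_sigma_finite_laplace)
  let ?P = "\<lambda>S. PiM S (\<lambda>_. laplace lam)"
  have l1_upd: "(\<Sum>j\<in>insert i S. \<bar>(u(i := x)) j\<bar>) = \<bar>x\<bar> + (\<Sum>j\<in>S. \<bar>u j\<bar>)" for u x
  proof -
    have "(\<Sum>j\<in>S. \<bar>(u(i := x)) j\<bar>) = (\<Sum>j\<in>S. \<bar>u j\<bar>)"
      using insert(2) by (intro sum.cong) auto
    then show ?thesis using insert(1,2) by simp
  qed
  have "ennreal (exp (- lam * t) * (lam * t) ^ card (insert i S) / fact (card (insert i S)))
      \<le> (\<integral>\<^sup>+x. ennreal (indicator {-t..t} x * (exp (- lam * (t - \<bar>x\<bar>)) * (lam * (t - \<bar>x\<bar>)) ^ card S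
            / fact (card S))) \<partial>laplace lam)"
    using insert(1,2) nn_integral_laplace_poisson_step[OF lam insert.prems] by simp
  also have "\<dots> \<le> (\<integral>\<^sup>+x. (\<integral>\<^sup>+u. indicator {u. (\<Sum>j\<in>S. \<bar>u j\<bar>) \<le> t - \<bar>x\<bar>} u \<partial>?P S) \<partial>laplace lam)"
    using insert.IH by (intro nn_integral_mono) (auto simp: indicator_def)
  also have "\<dots> = (\<integral>\<^sup>+x. (\<integral>\<^sup>+u. indicator {u. (\<Sum>j\<in>insert i S. \<bar>u j\<bar>) \<le> t} (u(i := x)) \<partial>?P S)
      \<partial>laplace lam)"
    by (intro nn_integral_cong) (simp only: indicator_def mem_Collect_eq l1_upd, auto)
  also have "\<dots> = (\<integral>\<^sup>+u. indicator {u. (\<Sum>j\<in>insert i S. \<bar>u j\<bar>) \<le> t} u \<partial>?P (insert i S))"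
    using insert(1,2) by (subst product_nn_integral_insert_rev) auto
  finally show ?case .
qed

lemma L2_set_sum_le:
  assumes "finite S"
  shows "L2_set (\<lambda>k. \<Sum>i\<in>S. f i k) K \<le> (\<Sum>i\<in>S. L2_set (f i) K)"
  using assms
proof (induction S rule: finite_induct)
  case empty
  then show ?case by (simp add: L2_set_def)
next
  case (insert i S)
  have "L2_set (\<lambda>k. \<Sum>j\<in>insert i S. f j k) K = L2_set (\<lambda>k. f i k + (\<Sum>j\<in>S. f j k)) K"
    using insert(1,2) by simp
  also have "\<dots> \<le> L2_set (f i) K + L2_set (\<lambda>k. \<Sum>j\<in>S. f j k) K"
    by (rule L2_set_triangle_ineq)
  also have "\<dots> \<le> L2_set (f i) K + (\<Sum>j\<in>S. L2_set (f j) K)"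
    using insert.IH by simp
  also have "\<dots> = (\<Sum>j\<in>insert i S. L2_set (f j) K)"
    using insert(1,2) by simp
  finally show ?case .
qed

lemma col_norm_le_col_norm_max: "i < p \<Longrightarrow> L2_set (\<lambda>k. X k i) {..<n} \<le> col_norm_max n p X"
  unfolding col_norm_max_def L2_set_def by (intro Max_ge) auto

lemma col_norm_max_nonneg: "0 < p \<Longrightarrow> 0 \<le> col_norm_max n p X"
  using col_norm_le_col_norm_max[of 0 p X n] L2_set_nonneg[of "\<lambda>k. X k 0" "{..<n}"] by linarith

lemma matvec_extend_zero:
  "S \<subseteq> {..<p} \<Longrightarrow> matvec p X (extend_zero S u) k = (\<Sum>i\<in>S. X k i * u i)"
  unfolding matvec_def extend_zero_def by (rule sum.mono_neutral_cong_right) auto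

lemma sum_square_matvec_extend_zero_le:
  assumes S: "S \<subseteq> {..<p}"
  shows "(\<Sum>k<n. (matvec p X (extend_zero S u) k)\<^sup>2) \<le> (col_norm_max n p X * (\<Sum>i\<in>S. \<bar>u i\<bar>))\<^sup>2"
proof -
  have "finite S" using S finite_subset by blast
  then have "L2_set (matvec p X (extend_zero S u)) {..<n} \<le> (\<Sum>i\<in>S. L2_set (\<lambda>k. X k i * u i) {..<n})"
    unfolding matvec_extend_zero[OF S] by (rule L2_set_sum_le)
  also have "\<dots> = (\<Sum>i\<in>S. \<bar>u i\<bar> * L2_set (\<lambda>k. X k i) {..<n})"
    by (simp add: L2_set_def power_mult_distrib real_sqrt_mult mult.commute flip: sum_distrib_left)
  also have "\<dots> \<le> (\<Sum>i\<in>S. \<bar>u i\<bar> * col_norm_max n p X)"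
    using S by (intro sum_mono mult_left_mono col_norm_le_col_norm_max) auto
  also have "\<dots> = col_norm_max n p X * (\<Sum>i\<in>S. \<bar>u i\<bar>)"
    by (simp add: sum_distrib_left mult.commute)
  finally have "(L2_set (matvec p X (extend_zero S u)) {..<n})\<^sup>2 \<le> (col_norm_max n p X * (\<Sum>i\<in>S. \<bar>u i\<bar>))\<^sup>2"
    by (intro power_mono) auto
  then show ?thesis by (simp add: L2_set_def sum_nonneg)
qed

lemma matvec_zero [simp]: "matvec p X (\<lambda>_. 0) = (\<lambda>_. 0)"
  by (simp add: matvec_def fun_eq_iff)

lemma Lambda_translate:
  assumes "\<forall>i<p. beta i - betas i = w i"
  shows "Lambda n p X beta betas Y = Lambda n p X w (\<lambda>_. 0) (\<lambda>k. Y k - matvec p X betas k)"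
proof -
  have "matvec p X (\<lambda>i. beta i - betas i) = matvec p X w"
    unfolding matvec_def using assms by (intro ext sum.cong) auto
  then show ?thesis by (simp add: Lambda_def)
qed

lemma Lambda_add_Lambda_uminus_ge:
  assumes "(\<Sum>k<n. (matvec p X w k)\<^sup>2) \<le> 1"
  shows "2 * exp (- 1 / 2) \<le> Lambda n p X w (\<lambda>_. 0) Y + Lambda n p X (\<lambda>i. - w i) (\<lambda>_. 0) Y"
proof -
  define q where "q = (\<Sum>k<n. (matvec p X w k)\<^sup>2)"
  define a where "a = (\<Sum>k<n. Y k * matvec p X w k)"
  have "matvec p X (\<lambda>i. - w i) = (\<lambda>k. - matvec p X w k)"
    by (simp add: matvec_def sum_negf fun_eq_iff)
  then have "Lambda n p X w (\<lambda>_. 0) Y + Lambda n p X (\<lambda>i. - w i) (\<lambda>_. 0) Y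
      = exp (- q / 2) * (exp a + exp (- a))"
    by (simp add: Lambda_def q_def a_def sum_negf distrib_left flip: exp_add)
  moreover have "exp (- 1 / 2) \<le> exp (- q / 2)" using assms by (simp add: q_def)
  moreover have "2 \<le> exp a + exp (- a)"
    using exp_ge_add_one_self[of a] exp_ge_add_one_self[of "- a"] by linarith
  ultimately show ?thesis
    by (metis mult.commute mult_mono exp_ge_zero zero_le_numeral)
qed

lemma extend_zero_component_measurable [measurable]:
  "(\<lambda>u. extend_zero S u i) \<in> borel_measurable (PiM S (\<lambda>_. laplace lam))"
proof (cases "i \<in> S")
  case True
  then have "(\<lambda>u. extend_zero S u i) = (\<lambda>u. u i)" by (simp add: extend_zero_def)
  with True show ?thesis by simp
qed (simp add: extend_zero_def)

lemma Lambda_extend_zero_measurable [measurable]: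
  "(\<lambda>u. Lambda n p X (extend_zero S u) betas Y) \<in> borel_measurable (PiM S (\<lambda>_. laplace lam))"
  unfolding Lambda_def matvec_def by measurable

lemma Lambda_nonneg: "0 \<le> Lambda n p X beta betas Y"
  by (simp add: Lambda_def)

lemma nn_integral_laplace_PiM_Lambda_ge:
  assumes lam: "0 < lam" and p: "0 < p" and S: "S \<subseteq> {..<p}" and r: "col_norm_max n p X * r \<le> 1"
  shows "ennreal (exp (- 1 / 2)) * (\<integral>\<^sup>+u. indicator {u. (\<Sum>j\<in>S. \<bar>u j\<bar>) \<le> r} u \<partial>PiM S (\<lambda>_. laplace lam))
    \<le> (\<integral>\<^sup>+u. Lambda n p X (extend_zero S u) (\<lambda>_. 0) Y \<partial>PiM S (\<lambda>_. laplace lam))"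
proof -
  let ?M = "PiM S (\<lambda>_. laplace lam)"
  let ?L = "\<lambda>w. ennreal (Lambda n p X w (\<lambda>_. 0) Y)"
  let ?ball = "{u. (\<Sum>j\<in>S. \<bar>u j\<bar>) \<le> r}"
  have fin: "finite S" using S finite_subset by blast
  have "extend_zero S (affine_on S (-1) (\<lambda>_. 0) u) = (\<lambda>i. - extend_zero S u i)" for u
    by (auto simp: extend_zero_def affine_on_def)
  then have reflect: "(\<integral>\<^sup>+u. ?L (\<lambda>i. - extend_zero S u i) \<partial>?M) \<le> (\<integral>\<^sup>+u. ?L (extend_zero S u) \<partial>?M)"
    using nn_integral_laplace_PiM_translate_ge[OF lam _ fin, of "-1" "\<lambda>u. ?L (extend_zero S u)" "\<lambda>_. 0"]
    by simp
  have pointwise: "ennreal (2 * exp (- 1 / 2)) * indicator ?ball u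
      \<le> ?L (extend_zero S u) + ?L (\<lambda>i. - extend_zero S u i)" for u
  proof (cases "u \<in> ?ball")
    case True
    have "col_norm_max n p X * (\<Sum>i\<in>S. \<bar>u i\<bar>) \<le> col_norm_max n p X * r"
      using True col_norm_max_nonneg[OF p] by (simp add: mult_left_mono)
    then have "(col_norm_max n p X * (\<Sum>i\<in>S. \<bar>u i\<bar>))\<^sup>2 \<le> 1"
      using r col_norm_max_nonneg[OF p] by (intro power_le_one) (auto simp: sum_nonneg)
    then have "(\<Sum>k<n. (matvec p X (extend_zero S u) k)\<^sup>2) \<le> 1"
      using sum_square_matvec_extend_zero_le[OF S, where n=n and X=X and u=u] by linarith
    then have "2 * exp (- 1 / 2) \<le> Lambda n p X (extend_zero S u) (\<lambda>_. 0) Y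
        + Lambda n p X (\<lambda>i. - extend_zero S u i) (\<lambda>_. 0) Y"
      by (rule Lambda_add_Lambda_uminus_ge)
    then have "ennreal (2 * exp (- 1 / 2)) \<le> ennreal (Lambda n p X (extend_zero S u) (\<lambda>_. 0) Y
        + Lambda n p X (\<lambda>i. - extend_zero S u i) (\<lambda>_. 0) Y)"
      by (rule ennreal_leI)
    with True show ?thesis by (simp add: Lambda_nonneg)
  qed simp
  have "ennreal 2 * (ennreal (exp (- 1 / 2)) * (\<integral>\<^sup>+u. indicator ?ball u \<partial>?M))
      = (\<integral>\<^sup>+u. ennreal (2 * exp (- 1 / 2)) * indicator ?ball u \<partial>?M)"
    by (subst nn_integral_cmult) (measurable, simp add: ennreal_mult mult.assoc)
  also have "\<dots> \<le> (\<integral>\<^sup>+u. ?L (extend_zero S u) + ?L (\<lambda>i. - extend_zero S u i) \<partial>?M)"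
    using pointwise by (rule nn_integral_mono)
  also have "\<dots> = (\<integral>\<^sup>+u. ?L (extend_zero S u) \<partial>?M) + (\<integral>\<^sup>+u. ?L (\<lambda>i. - extend_zero S u i) \<partial>?M)"
    by (rule nn_integral_add) (simp_all add: Lambda_def matvec_def)
  also have "\<dots> \<le> ennreal 2 * (\<integral>\<^sup>+u. ?L (extend_zero S u) \<partial>?M)"
    using reflect by (simp add: mult_2 add_left_mono)
  finally show ?thesis
    by (subst (asm) ennreal_mult_le_mult_iff) auto
qed

lemma nn_integral_slab_Lambda_ge:
  assumes lam: "0 < lam" and p: "0 < p" and S: "S \<subseteq> {..<p}"
    and supp: "\<forall>i<p. i \<notin> S \<longrightarrow> betas i = 0"
    and r: "0 \<le> r" "col_norm_max n p X * r \<le> 1"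
  shows "ennreal (exp (- lam * (\<Sum>i\<in>S. \<bar>betas i\<bar>)) * exp (- 1 / 2)
      * (exp (- lam * r) * (lam * r) ^ card S / fact (card S)))
    \<le> (\<integral>\<^sup>+u. Lambda n p X (extend_zero S u) betas Y \<partial>slab S lam)"
proof -
  let ?M = "PiM S (\<lambda>_. laplace lam)"
  let ?Y = "\<lambda>k. Y k - matvec p X betas k"
  let ?E = "exp (- lam * (\<Sum>i\<in>S. \<bar>betas i\<bar>))"
  have fin: "finite S" using S finite_subset by blast
  have "Lambda n p X (extend_zero S (affine_on S 1 betas u)) betas Y
      = Lambda n p X (extend_zero S u) (\<lambda>_. 0) ?Y" for u
    using supp by (intro Lambda_translate) (auto simp: extend_zero_def affine_on_def)
  then have shift: "ennreal ?E * (\<integral>\<^sup>+u. Lambda n p X (extend_zero S u) (\<lambda>_. 0) ?Y \<partial>?M)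
      \<le> (\<integral>\<^sup>+u. Lambda n p X (extend_zero S u) betas Y \<partial>?M)"
    using nn_integral_laplace_PiM_translate_ge[OF lam _ fin,
        of 1 "\<lambda>u. ennreal (Lambda n p X (extend_zero S u) betas Y)" betas]
    by simp
  define P where "P = exp (- lam * r) * (lam * r) ^ card S / fact (card S)"
  have "0 \<le> P" using lam r by (simp add: P_def)
  then have "ennreal (?E * exp (- 1 / 2) * P) = ennreal ?E * (ennreal (exp (- 1 / 2)) * ennreal P)"
    by (simp add: ennreal_mult mult.assoc)
  also have "\<dots> \<le> ennreal ?E * (ennreal (exp (- 1 / 2))
      * (\<integral>\<^sup>+u. indicator {u. (\<Sum>j\<in>S. \<bar>u j\<bar>) \<le> r} u \<partial>?M))"
    using nn_integral_laplace_PiM_l1_ball_ge[OF lam fin r(1)] unfolding P_def[symmetric]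
    by (intro mult_left_mono) auto
  also have "\<dots> \<le> ennreal ?E * (\<integral>\<^sup>+u. Lambda n p X (extend_zero S u) (\<lambda>_. 0) ?Y \<partial>?M)"
    using nn_integral_laplace_PiM_Lambda_ge[OF lam p S r(2)] by (rule mult_left_mono) simp
  also have "\<dots> \<le> (\<integral>\<^sup>+u. Lambda n p X (extend_zero S u) betas Y \<partial>slab S lam)"
    using shift by (simp add: slab_def)
  finally show ?thesis unfolding P_def .
qed

lemma prior_nn_integral_ge_term:
  assumes S: "S \<subseteq> {..<p}" and pip: "\<And>s. 0 \<le> pip s"
  shows "ennreal (pip (card S) / real (p choose card S)) * (\<integral>\<^sup>+b. f (extend_zero S b) \<partial>slab S lam)
    \<le> prior_nn_integral p pip lam f"
proof -
  have "card S \<le> p" using card_mono[OF _ S] by simp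
  have "finite {S'. S' \<subseteq> {..<p} \<and> card S' = card S}"
    by (rule finite_subset[of _ "Pow {..<p}"]) auto
  then have "ennreal (pip (card S) / real (p choose card S)) * (\<integral>\<^sup>+b. f (extend_zero S b) \<partial>slab S lam)
      \<le> ennreal (pip (card S) / real (p choose card S))
        * (\<Sum>S'\<in>{S'. S' \<subseteq> {..<p} \<and> card S' = card S}. \<integral>\<^sup>+b. f (extend_zero S' b) \<partial>slab S' lam)"
    using S by (intro mult_left_mono member_le_sum) auto
  also have "\<dots> \<le> prior_nn_integral p pip lam f"
    unfolding prior_nn_integral_def using \<open>card S \<le> p\<close> by (intro member_le_sum) auto
  finally show ?thesis .
qed

lemma fact_mult_choose_le_pow:
  assumes "s \<le> p"
  shows "fact s * real (p choose s) \<le> real p ^ s"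
proof -
  have "fact p = fact s * (p choose s) * fact (p - s)"
    using binomial_fact_lemma[OF assms] by (simp add: algebra_simps)
  then have "fact p div fact (p - s) = fact s * (p choose s)"
    by simp
  with fact_div_fact_le_pow[OF assms] have "fact s * (p choose s) \<le> p ^ s"
    by simp
  then have "real (fact s * (p choose s)) \<le> real (p ^ s)"
    by (rule of_nat_mono)
  then show ?thesis by simp
qed

lemma choose_weight_ge:
  assumes p: "2 \<le> p" and s: "s \<le> p"
  shows "exp (- 1) / real p ^ (2 * s)
    \<le> exp (- 1 / 2) * (exp (- 1 / real p) * (1 / real p) ^ s / fact s) / real (p choose s)"
proof -
  have C: "0 < real (p choose s)" using s by simp
  have "exp (- 1) \<le> exp (- 1 / 2 + - 1 / real p)"
    using p by (simp add: field_simps)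
  then have e: "exp (- 1) \<le> exp (- 1 / 2) * exp (- 1 / real p)"
    by (simp only: exp_add)
  have "exp (- 1) / real p ^ (2 * s) = exp (- 1) * (1 / real p) ^ s / real p ^ s"
    by (simp add: power_mult power2_eq_square power_one_over power_mult_distrib)
  also have "\<dots> \<le> exp (- 1) * (1 / real p) ^ s / (fact s * real (p choose s))"
    using fact_mult_choose_le_pow[OF s] C p by (intro divide_left_mono) auto
  also have "\<dots> \<le> exp (- 1 / 2) * exp (- 1 / real p) * (1 / real p) ^ s / (fact s * real (p choose s))"
    using e by (intro divide_right_mono mult_right_mono) auto
  also have "\<dots> = exp (- 1 / 2) * (exp (- 1 / real p) * (1 / real p) ^ s / fact s) / real (p choose s)"
    by (simp add: field_simps)
  finally show ?thesis .
qed

lemma prior_nn_integral_Lambda_ge: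
  assumes p: "2 \<le> p" and lam: "0 < lam" and lam_ge: "col_norm_max n p X / real p \<le> lam"
    and pip: "\<And>s. 0 \<le> pip s" and S: "S \<subseteq> {..<p}" and supp: "\<forall>i<p. i \<notin> S \<longrightarrow> betas i = 0"
  shows "ennreal (pip (card S) / real p ^ (2 * card S) * exp (- lam * (\<Sum>i\<in>S. \<bar>betas i\<bar>)) * exp (- 1))
    \<le> prior_nn_integral p pip lam (\<lambda>beta. Lambda n p X beta betas Y)"
proof -
  define r where "r = 1 / (lam * real p)"
  define E where "E = exp (- lam * (\<Sum>i\<in>S. \<bar>betas i\<bar>))"
  define B where "B = E * exp (- 1 / 2) * (exp (- 1 / real p) * (1 / real p) ^ card S / fact (card S))"
  have "card S \<le> p" using card_mono[OF _ S] by simp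
  have lam_r: "lam * r = 1 / real p" and "0 \<le> r" using lam p by (auto simp: r_def)
  have "col_norm_max n p X * r \<le> 1" using lam_ge lam p by (simp add: r_def field_simps)
  moreover have "exp (- lam * r) = exp (- 1 / real p)"
    using lam_r by simp
  ultimately have integral_ge: "ennreal B \<le> (\<integral>\<^sup>+u. Lambda n p X (extend_zero S u) betas Y \<partial>slab S lam)"
    using nn_integral_slab_Lambda_ge[OF lam _ S supp \<open>0 \<le> r\<close>, of n X Y] p
    unfolding B_def E_def lam_r by simp
  have "pip (card S) * E * (exp (- 1) / real p ^ (2 * card S))
      \<le> pip (card S) * E * (exp (- 1 / 2) * (exp (- 1 / real p) * (1 / real p) ^ card S / fact (card S))
          / real (p choose card S))"
    using choose_weight_ge[OF p \<open>card S \<le> p\<close>] pip[of "card S"] by (intro mult_left_mono) (auto simp: E_def)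
  then have "pip (card S) / real p ^ (2 * card S) * E * exp (- 1) \<le> pip (card S) / real (p choose card S) * B"
    by (simp add: B_def ac_simps)
  then have "ennreal (pip (card S) / real p ^ (2 * card S) * E * exp (- 1))
      \<le> ennreal (pip (card S) / real (p choose card S)) * ennreal B"
    using pip[of "card S"] by (simp add: B_def E_def flip: ennreal_mult)
  also have "\<dots> \<le> ennreal (pip (card S) / real (p choose card S))
        * (\<integral>\<^sup>+u. Lambda n p X (extend_zero S u) betas Y \<partial>slab S lam)"
    using integral_ge by (rule mult_left_mono) simp
  also have "\<dots> \<le> prior_nn_integral p pip lam (\<lambda>beta. Lambda n p X beta betas Y)"
    by (rule prior_nn_integral_ge_term[OF S pip])
  finally show ?thesis unfolding E_def .
qed

theorem lemma2:
  shows "\<exists>P0::nat. \<forall>p\<ge>P0. \<forall>(n::nat) (X::nat \<Rightarrow> nat \<Rightarrow> real) (lam::real) (pip::nat \<Rightarrow> real)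
            (betas::nat \<Rightarrow> real) (Y::nat \<Rightarrow> real).
     0 < lam \<and> col_norm_max n p X / real p \<le> lam
     \<and> lam \<le> 4 * col_norm_max n p X * sqrt (ln (real p))
     \<and> (\<forall>s. 0 \<le> pip s) \<and> (\<Sum>s\<le>p. pip s) = 1
     \<longrightarrow> prior_nn_integral p pip lam (\<lambda>beta. Lambda n p X beta betas Y)
         \<ge> ennreal (pip (card {i. i < p \<and> betas i \<noteq> 0}) / real p ^ (2 * card {i. i < p \<and> betas i \<noteq> 0})
                    * exp (- lam * (\<Sum>i<p. \<bar>betas i\<bar>)) * exp (-1))"
proof (intro exI[of _ 2] allI impI)
  fix p n :: nat and X :: "nat \<Rightarrow> nat \<Rightarrow> real" and lam :: real and pip betas Y :: "nat \<Rightarrow> real"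
  assume "2 \<le> p" and "0 < lam \<and> col_norm_max n p X / real p \<le> lam
     \<and> lam \<le> 4 * col_norm_max n p X * sqrt (ln (real p))
     \<and> (\<forall>s. 0 \<le> pip s) \<and> (\<Sum>s\<le>p. pip s) = 1"
  moreover define S where "S = {i. i < p \<and> betas i \<noteq> 0}"
  moreover have "(\<Sum>i\<in>S. \<bar>betas i\<bar>) = (\<Sum>i<p. \<bar>betas i\<bar>)"
    by (rule sum.mono_neutral_left) (auto simp: S_def)
  ultimately show "prior_nn_integral p pip lam (\<lambda>beta. Lambda n p X beta betas Y)
      \<ge> ennreal (pip (card S) / real p ^ (2 * card S) * exp (- lam * (\<Sum>i<p. \<bar>betas i\<bar>)) * exp (-1))"
    using prior_nn_integral_Lambda_ge[of p lam n X pip S betas Y] by (auto simp: S_def)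
qed

end
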